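(* Let $0<a<b$. The infinite server problem on the real line with source $0$ is competitive if and only if the infinite server problem on $(\{0\}\cup[a,b],0)$ (the subspace $\{0\}\cup[a,b]$ of the real line with source $0$) is competitive.
   Context: Infinite server problem on $(M,s)$: $M$ is a metric space and $s\in M$ the source; an unbounded number of servers initially reside at $s$. A finite sequence of requests (points of $M$) is revealed one by one; each must be served immediately, without knowledge of future requests, by moving some server to it; the cost is the total distance traveled. The problem is competitive if there is a deterministic online algorithm and constants $\rho,c$ with $ALG(\sigma)\le\rho\,OPT(\sigma)+c$ for all request sequences $\sigma$. *)

theory Defs
  imports "HOL-Analysis.Analysis"
begin

text \<open>Servers are indexed by nat; a configuration maps each server to its position.\<close>

fun serve_cost :: "(nat \<Rightarrow> 'a::metric_space) \<Rightarrow> nat list \<Rightarrow> 'a list \<Rightarrow> real" where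
  "serve_cost c (i # is) (r # rs) = dist (c i) r + serve_cost (c(i := r)) is rs"
| "serve_cost c _ _ = 0"

definition opt_cost :: "'a::metric_space \<Rightarrow> 'a list \<Rightarrow> real" where
  "opt_cost s \<sigma> = Inf {serve_cost (\<lambda>_. s) cs \<sigma> | cs. length cs = length \<sigma>}"

text \<open>A deterministic online algorithm chooses the serving server based only on the
  requests revealed so far (the current request being the last element).\<close>
definition online_choices :: "('a list \<Rightarrow> nat) \<Rightarrow> 'a list \<Rightarrow> nat list" where
  "online_choices A \<sigma> = map (\<lambda>k. A (take (Suc k) \<sigma>)) [0..<length \<sigma>]"

definition alg_cost :: "('a list \<Rightarrow> nat) \<Rightarrow> 'a::metric_space \<Rightarrow> 'a list \<Rightarrow> real" where
  "alg_cost A s \<sigma> = serve_cost (\<lambda>_. s) (online_choices A \<sigma>) \<sigma>"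

definition competitive :: "'a::metric_space set \<Rightarrow> 'a \<Rightarrow> bool" where
  "competitive M s \<longleftrightarrow>
     (\<exists>(A :: 'a list \<Rightarrow> nat) (\<rho>::real) (c::real). \<forall>\<sigma>. set \<sigma> \<subseteq> M \<longrightarrow>
        alg_cost A s \<sigma> \<le> \<rho> * opt_cost s \<sigma> + c)"

end

theory Submission
  imports Defs
begin

text \<open>Restricting the request space preserves competitiveness, so only the converse needs
  work. Split the nonzero reals by sign and into the scale classes \<open>a r\<^sup>k \<le> \<bar>x\<bar> < a r\<^sup>k\<^sup>+\<^sup>1\<close>,
  \<open>r = b / a\<close>; dividing by \<open>\<plusminus>r\<^sup>k\<close> turns each class into a copy of \<open>[a, b)\<close>. The online
  algorithm on the line runs a separate copy of the given algorithm, with its own servers, on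
  every class, so its cost is the \<open>r\<^sup>k\<close>-weighted sum of the class costs; the additive constant
  is absorbed because every nonempty class sequence costs at least \<open>a\<close>. Conversely every
  offline schedule on the line induces schedules on all classes whose weighted total cost is
  within a constant factor of its own: a potential function charges the movement of the class
  copies of a server to the movement of the server itself.\<close>

definition schedule_config :: "(nat \<Rightarrow> 'a) \<Rightarrow> (nat \<times> 'a) list \<Rightarrow> nat \<Rightarrow> 'a" where
  "schedule_config c p = foldl (\<lambda>c (i, x). c(i := x)) c p"

definition schedule_cost :: "(nat \<Rightarrow> 'a::metric_space) \<Rightarrow> (nat \<times> 'a) list \<Rightarrow> real" where
  "schedule_cost c p = serve_cost c (map fst p) (map snd p)"

lemma schedule_config_Nil [simp]: "schedule_config c [] = c"
  by (simp add: schedule_config_def)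

lemma schedule_config_snoc [simp]:
  "schedule_config c (p @ [(i, x)]) = (schedule_config c p)(i := x)"
  by (simp add: schedule_config_def)

lemma schedule_cost_Nil [simp]: "schedule_cost c [] = 0"
  by (simp add: schedule_cost_def)

lemma schedule_cost_snoc:
  "schedule_cost c (p @ [(i, x)]) = schedule_cost c p + dist (schedule_config c p i) x"
proof (induction p arbitrary: c)
  case Nil
  then show ?case by (simp add: schedule_cost_def)
next
  case (Cons q p)
  obtain j y where "q = (j, y)" by fastforce
  with Cons[of "c(j := y)"] show ?case
    by (simp add: schedule_cost_def schedule_config_def fun_upd_def)
qed

lemma schedule_cost_nonneg: "0 \<le> schedule_cost c p"
proof (induction p rule: rev_induct)
  case (snoc q p)
  obtain j y where "q = (j, y)" by fastforce
  with snoc show ?case by (simp add: schedule_cost_snoc)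
qed simp

lemma serve_cost_eq_schedule_cost:
  "length cs = length \<sigma> \<Longrightarrow> serve_cost c cs \<sigma> = schedule_cost c (zip cs \<sigma>)"
  by (simp add: schedule_cost_def)

lemma serve_cost_nonneg: "length cs = length \<sigma> \<Longrightarrow> 0 \<le> serve_cost c cs \<sigma>"
  by (simp add: serve_cost_eq_schedule_cost schedule_cost_nonneg)

lemma length_online_choices [simp]: "length (online_choices A \<sigma>) = length \<sigma>"
  by (simp add: online_choices_def)

lemma online_choices_snoc:
  "online_choices A (\<sigma> @ [x]) = online_choices A \<sigma> @ [A (\<sigma> @ [x])]"
  by (simp add: online_choices_def)

abbreviation online_config :: "('a list \<Rightarrow> nat) \<Rightarrow> 'a \<Rightarrow> 'a list \<Rightarrow> nat \<Rightarrow> 'a" where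
  "online_config A s \<sigma> \<equiv> schedule_config (\<lambda>_. s) (zip (online_choices A \<sigma>) \<sigma>)"

lemma online_config_snoc:
  "online_config A s (\<sigma> @ [x]) = (online_config A s \<sigma>)(A (\<sigma> @ [x]) := x)"
  by (simp add: online_choices_snoc)

lemma alg_cost_Nil [simp]: "alg_cost A s [] = 0"
  by (simp add: alg_cost_def online_choices_def)

lemma alg_cost_snoc:
  "alg_cost A s (\<sigma> @ [x]) = alg_cost A s \<sigma> + dist (online_config A s \<sigma> (A (\<sigma> @ [x]))) x"
  by (simp add: alg_cost_def online_choices_snoc serve_cost_eq_schedule_cost schedule_cost_snoc)

lemma opt_cost_le:
  "length cs = length \<sigma> \<Longrightarrow> opt_cost s \<sigma> \<le> serve_cost (\<lambda>_. s) cs \<sigma>"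
  unfolding opt_cost_def
  by (rule cInf_lower) (auto intro: bdd_belowI[of _ 0] serve_cost_nonneg)

lemma opt_cost_Nil [simp]: "opt_cost s [] = 0"
  by (simp add: opt_cost_def)

lemma opt_cost_greatest:
  assumes "\<And>cs. length cs = length \<sigma> \<Longrightarrow> z \<le> serve_cost (\<lambda>_. s) cs \<sigma>"
  shows "z \<le> opt_cost s \<sigma>"
  unfolding opt_cost_def
  using assms by (intro cInf_greatest) (auto intro: exI[of _ "replicate (length \<sigma>) 0"])

lemma opt_cost_nonneg: "0 \<le> opt_cost s \<sigma>"
  by (rule opt_cost_greatest) (rule serve_cost_nonneg)

lemma opt_cost_ge_dist_source:
  assumes "\<sigma> \<noteq> []" and "\<And>x. x \<in> set \<sigma> \<Longrightarrow> d \<le> dist s x"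
  shows "d \<le> opt_cost s \<sigma>"
proof (rule opt_cost_greatest)
  fix cs :: "nat list"
  assume len: "length cs = length \<sigma>"
  obtain x \<sigma>' i cs' where \<sigma>: "\<sigma> = x # \<sigma>'" and cs: "cs = i # cs'"
    using assms(1) len by (cases \<sigma>; cases cs) auto
  have "0 \<le> serve_cost ((\<lambda>_. s)(i := x)) cs' \<sigma>'"
    using len by (intro serve_cost_nonneg) (simp add: \<sigma> cs)
  then show "d \<le> serve_cost (\<lambda>_. s) cs \<sigma>"
    using assms(2)[of x] by (simp add: \<sigma> cs)
qed

lemma competitive_subset:
  assumes "competitive N s" and "M \<subseteq> N"
  shows "competitive M s"
  using assms unfolding competitive_def by blast

lemma alg_cost_le_mult_opt_cost:
  assumes bound: "\<forall>\<sigma>. set \<sigma> \<subseteq> M \<longrightarrow> alg_cost A s \<sigma> \<le> \<rho> * opt_cost s \<sigma> + c"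
    and "0 < d" and "set \<sigma> \<subseteq> M" and far: "\<And>x. x \<in> set \<sigma> \<Longrightarrow> d \<le> dist s x"
  shows "alg_cost A s \<sigma> \<le> (max \<rho> 0 + c / d) * opt_cost s \<sigma>"
proof (cases "\<sigma> = []")
  case False
  have "0 \<le> c"
    using bound[rule_format, of "[]"] by simp
  moreover have "d \<le> opt_cost s \<sigma>"
    using False far by (rule opt_cost_ge_dist_source)
  ultimately have "c \<le> c / d * opt_cost s \<sigma>"
    using \<open>0 < d\<close> by (simp add: field_simps mult_left_mono)
  moreover have "\<rho> * opt_cost s \<sigma> \<le> max \<rho> 0 * opt_cost s \<sigma>"
    using opt_cost_nonneg by (intro mult_right_mono) auto
  ultimately show ?thesis
    using bound \<open>set \<sigma> \<subseteq> M\<close> by (fastforce simp: distrib_right)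
qed simp

section \<open>Splitting requests into rescaled classes\<close>

locale class_decomposition =
  fixes cls :: "'a::metric_space \<Rightarrow> 'k::countable"
    and embed :: "'k \<Rightarrow> 'b::metric_space \<Rightarrow> 'a"
    and rescale :: "'k \<Rightarrow> 'a \<Rightarrow> 'b"
    and weight :: "'k \<Rightarrow> real"
    and s :: 'a and t :: 'b
  assumes embed_rescale: "embed (cls x) (rescale (cls x) x) = x"
    and dist_embed: "dist (embed \<kappa> u) (embed \<kappa> v) = weight \<kappa> * dist u v"
    and embed_source: "embed \<kappa> t = s"
begin

definition class_requests :: "'k \<Rightarrow> 'a list \<Rightarrow> 'b list" where
  "class_requests \<kappa> \<sigma> = map (rescale \<kappa>) (filter (\<lambda>x. cls x = \<kappa>) \<sigma>)"

lemma class_requests_Nil [simp]: "class_requests \<kappa> [] = []"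
  by (simp add: class_requests_def)

lemma class_requests_snoc:
  "class_requests \<kappa> (\<sigma> @ [x]) = class_requests \<kappa> \<sigma> @ (if cls x = \<kappa> then [rescale \<kappa> x] else [])"
  by (simp add: class_requests_def)

text \<open>Each class runs its own copy of \<open>A\<close> on its rescaled requests, with its own pool of
  servers \<open>to_nat (\<kappa>, j)\<close>.\<close>

definition class_algorithm :: "('b list \<Rightarrow> nat) \<Rightarrow> 'a list \<Rightarrow> nat" where
  "class_algorithm A \<sigma> = to_nat (cls (last \<sigma>), A (class_requests (cls (last \<sigma>)) \<sigma>))"

lemma online_config_class_algorithm:
  "online_config (class_algorithm A) s \<sigma> (to_nat (\<kappa>, j)) =
     embed \<kappa> (online_config A t (class_requests \<kappa> \<sigma>) j)"
proof (induction \<sigma> arbitrary: \<kappa> j rule: rev_induct)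
  case Nil
  show ?case by (simp add: online_choices_def embed_source)
next
  case (snoc x \<sigma>)
  have "class_algorithm A (\<sigma> @ [x]) = to_nat (cls x, A (class_requests (cls x) (\<sigma> @ [x])))"
    by (simp add: class_algorithm_def)
  then show ?case
    using snoc embed_rescale[of x] by (auto simp: online_config_snoc class_requests_snoc)
qed

lemma alg_cost_class_algorithm:
  assumes "finite K" and "cls ` set \<sigma> \<subseteq> K"
  shows "alg_cost (class_algorithm A) s \<sigma> = (\<Sum>\<kappa>\<in>K. weight \<kappa> * alg_cost A t (class_requests \<kappa> \<sigma>))"
  using assms(2)
proof (induction \<sigma> rule: rev_induct)
  case (snoc x \<sigma>)
  define \<sigma>\<^sub>x where "\<sigma>\<^sub>x = class_requests (cls x) (\<sigma> @ [x])"
  define d where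
    "d = dist (online_config A t (class_requests (cls x) \<sigma>) (A \<sigma>\<^sub>x)) (rescale (cls x) x)"
  have "alg_cost (class_algorithm A) s (\<sigma> @ [x]) =
      alg_cost (class_algorithm A) s \<sigma> + weight (cls x) * d"
    using dist_embed[of "cls x" _ "rescale (cls x) x", unfolded embed_rescale]
    by (simp add: alg_cost_snoc class_algorithm_def online_config_class_algorithm d_def
        flip: \<sigma>\<^sub>x_def)
  moreover have "weight \<kappa> * alg_cost A t (class_requests \<kappa> (\<sigma> @ [x])) =
      weight \<kappa> * alg_cost A t (class_requests \<kappa> \<sigma>) + (if \<kappa> = cls x then weight (cls x) * d else 0)"
    for \<kappa>
    by (auto simp: class_requests_snoc alg_cost_snoc d_def \<sigma>\<^sub>x_def distrib_left)
  ultimately show ?case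
    using snoc assms(1) by (simp add: sum.distrib sum.delta)
qed (simp add: sum.neutral)

definition class_schedule :: "'k \<Rightarrow> (nat \<times> 'a) list \<Rightarrow> (nat \<times> 'b) list" where
  "class_schedule \<kappa> p = map (\<lambda>(i, x). (i, rescale \<kappa> x)) (filter (\<lambda>(i, x). cls x = \<kappa>) p)"

definition class_position :: "(nat \<times> 'a) list \<Rightarrow> nat \<Rightarrow> 'k \<Rightarrow> 'a" where
  "class_position p i \<kappa> = embed \<kappa> (schedule_config (\<lambda>_. t) (class_schedule \<kappa> p) i)"

lemma class_schedule_Nil [simp]: "class_schedule \<kappa> [] = []"
  by (simp add: class_schedule_def)

lemma class_schedule_snoc:
  "class_schedule \<kappa> (p @ [(i, x)]) =
     class_schedule \<kappa> p @ (if cls x = \<kappa> then [(i, rescale \<kappa> x)] else [])"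
  by (simp add: class_schedule_def)

lemma map_snd_class_schedule: "map snd (class_schedule \<kappa> p) = class_requests \<kappa> (map snd p)"
  by (induction p) (auto simp: class_schedule_def class_requests_def)

lemma class_position_Nil [simp]: "class_position [] i \<kappa> = s"
  by (simp add: class_position_def class_schedule_def embed_source)

lemma class_position_snoc:
  "class_position (p @ [(i, x)]) j =
     (if j = i then (class_position p i)(cls x := x) else class_position p j)"
  using embed_rescale[of x] by (auto simp: class_position_def class_schedule_snoc)

lemma weighted_class_schedule_cost_snoc:
  "weight \<kappa> * schedule_cost (\<lambda>_. t) (class_schedule \<kappa> (p @ [(i, x)])) =
     weight \<kappa> * schedule_cost (\<lambda>_. t) (class_schedule \<kappa> p) +
     (if \<kappa> = cls x then dist (class_position p i \<kappa>) x else 0)"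
  using embed_rescale[of x]
  by (auto simp: class_schedule_snoc schedule_cost_snoc class_position_def distrib_left
      simp flip: dist_embed)

lemma sum_weighted_class_schedule_cost_snoc:
  assumes "finite K" and "cls x \<in> K"
  shows "(\<Sum>\<kappa>\<in>K. weight \<kappa> * schedule_cost (\<lambda>_. t) (class_schedule \<kappa> (p @ [(i, x)]))) =
     (\<Sum>\<kappa>\<in>K. weight \<kappa> * schedule_cost (\<lambda>_. t) (class_schedule \<kappa> p)) +
     dist (class_position p i (cls x)) x"
  using assms by (simp add: weighted_class_schedule_cost_snoc sum.distrib sum.delta)

lemma opt_cost_class_requests_le:
  "opt_cost t (class_requests \<kappa> (map snd p)) \<le> schedule_cost (\<lambda>_. t) (class_schedule \<kappa> p)"
proof -
  have "length (map fst (class_schedule \<kappa> p)) = length (class_requests \<kappa> (map snd p))"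
    by (metis length_map map_snd_class_schedule)
  then show ?thesis
    by (metis opt_cost_le schedule_cost_def map_snd_class_schedule)
qed

end

section \<open>Scale classes of the real line\<close>

lemma sum_power_nat_diff_le:
  fixes q :: real
  assumes "finite G" and "0 \<le> q" and "q < 1" and "\<And>k. k \<in> G \<Longrightarrow> k \<le> k\<^sub>0"
  shows "(\<Sum>k\<in>G. q ^ nat (k\<^sub>0 - k)) \<le> 1 / (1 - q)"
proof -
  have "inj_on (\<lambda>k. nat (k\<^sub>0 - k)) G"
  proof (rule inj_onI)
    fix u v
    assume "u \<in> G" "v \<in> G" "nat (k\<^sub>0 - u) = nat (k\<^sub>0 - v)"
    then show "u = v"
      using assms(4)[of u] assms(4)[of v] by linarith
  qed
  then have "(\<Sum>k\<in>G. q ^ nat (k\<^sub>0 - k)) = (\<Sum>n\<in>(\<lambda>k. nat (k\<^sub>0 - k)) ` G. q ^ n)"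
    by (simp add: sum.reindex)
  also have "\<dots> \<le> (\<Sum>n. q ^ n)"
    using assms(1-3) by (intro sum_le_suminf summable_geometric) auto
  also have "\<dots> = 1 / (1 - q)"
    using assms(2,3) by (intro suminf_geometric) simp
  finally show ?thesis .
qed

lemma abs_diff_mult_le:
  fixes f f' g g' :: real
  assumes "0 \<le> g" "g \<le> 1" "0 \<le> f'" "f' \<le> R" "\<bar>f - f'\<bar> \<le> l" "\<bar>g - g'\<bar> \<le> m"
  shows "\<bar>f * g - f' * g'\<bar> \<le> l + R * m"
proof -
  have "\<bar>f * g - f' * g'\<bar> = \<bar>(f - f') * g + f' * (g - g')\<bar>"
    by (simp add: algebra_simps)
  also have "\<dots> \<le> \<bar>f - f'\<bar> * g + f' * \<bar>g - g'\<bar>"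
    using assms(1,3) by (simp add: abs_mult abs_triangle_ineq[THEN order_trans])
  also have "\<dots> \<le> l * 1 + R * m"
    using assms by (intro add_mono mult_mono) auto
  finally show ?thesis
    by simp
qed

lemma finite_option_sign_classes:
  "finite K \<Longrightarrow> finite {k. Some (k, s) \<in> K}"
  using finite_vimageI[of K "\<lambda>k. Some (k, s)"] by (simp add: inj_def vimage_def)

lemma sum_option_sign_le:
  fixes D :: "('a \<times> bool) option \<Rightarrow> real"
  assumes "finite K" and "D None = 0" and "\<And>\<kappa>. 0 \<le> D \<kappa>"
  shows "sum D K \<le> (\<Sum>k\<in>{k. Some (k, True) \<in> K}. D (Some (k, True)))
    + (\<Sum>k\<in>{k. Some (k, False) \<in> K}. D (Some (k, False)))"
proof -
  define classes where "classes s = (\<lambda>k. Some (k, s)) ` {k. Some (k, s) \<in> K}" for s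
  have fin: "finite (classes s)" for s
    using finite_option_sign_classes[OF assms(1)] by (simp add: classes_def)
  have "K \<subseteq> insert None (classes True \<union> classes False)"
  proof
    fix \<kappa>
    assume "\<kappa> \<in> K"
    then show "\<kappa> \<in> insert None (classes True \<union> classes False)"
    proof (cases \<kappa>)
      case (Some ks)
      moreover obtain k s where "ks = (k, s)"
        by fastforce
      ultimately show ?thesis
        using \<open>\<kappa> \<in> K\<close> by (cases s) (auto simp: classes_def)
    qed simp
  qed
  then have "sum D K \<le> sum D (insert None (classes True \<union> classes False))"
    using fin assms(3) by (intro sum_mono2) auto
  also have "\<dots> = sum D (classes True) + sum D (classes False)"
  proof -
    have "classes True \<inter> classes False = {}" and "None \<notin> classes True \<union> classes False"
      by (auto simp: classes_def)
    then show ?thesis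
      using fin assms(2) by (simp add: sum.union_disjoint)
  qed
  also have "\<dots> = (\<Sum>k\<in>{k. Some (k, True) \<in> K}. D (Some (k, True)))
      + (\<Sum>k\<in>{k. Some (k, False) \<in> K}. D (Some (k, False)))"
    by (simp add: classes_def sum.reindex inj_on_def)
  finally show ?thesis .
qed

text \<open>The class \<open>Some (k, s)\<close> consists of the reals of sign \<open>s\<close> with
  \<open>a r\<^sup>k \<le> \<bar>x\<bar> < a r\<^sup>k\<^sup>+\<^sup>1\<close>, and dividing by \<open>\<plusminus>r\<^sup>k\<close> maps it onto \<open>[a, a r)\<close>; the source \<open>0\<close> forms
  the class \<open>None\<close> of weight \<open>0\<close>.\<close>

type_synonym scale_index = "(int \<times> bool) option"

locale scale_classes =
  fixes a r :: real
  assumes a_pos: "0 < a" and r_gt_1: "1 < r"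
begin

definition scale_class :: "real \<Rightarrow> scale_index" where
  "scale_class x = (if x = 0 then None else Some (\<lfloor>log r (\<bar>x\<bar> / a)\<rfloor>, 0 < x))"

definition class_scale :: "int \<Rightarrow> real" where
  "class_scale k = a * r powr k"

definition class_weight :: "scale_index \<Rightarrow> real" where
  "class_weight \<kappa> = (case \<kappa> of None \<Rightarrow> 0 | Some (k, s) \<Rightarrow> r powr k)"

definition class_embed :: "scale_index \<Rightarrow> real \<Rightarrow> real" where
  "class_embed \<kappa> u = (case \<kappa> of None \<Rightarrow> 0 | Some (k, s) \<Rightarrow> (if s then 1 else -1) * r powr k * u)"

definition class_rescale :: "scale_index \<Rightarrow> real \<Rightarrow> real" where
  "class_rescale \<kappa> x = (case \<kappa> of None \<Rightarrow> 0 | Some (k, s) \<Rightarrow> \<bar>x\<bar> / r powr k)"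

definition signed :: "bool \<Rightarrow> real \<Rightarrow> real" where
  "signed s y = (if s then y else - y)"

lemma r_pos: "0 < r"
  using r_gt_1 by simp

lemma class_scale_pos: "0 < class_scale k"
  using a_pos r_pos by (simp add: class_scale_def)

lemma class_weight_nonneg: "0 \<le> class_weight \<kappa>"
  by (auto simp: class_weight_def split: option.splits)

lemma dist_signed: "\<bar>signed s u - signed s v\<bar> = \<bar>u - v\<bar>"
  by (auto simp: signed_def)

lemma scale_class_eq_None_iff: "scale_class x = None \<longleftrightarrow> x = 0"
  by (simp add: scale_class_def)

lemma scale_class_SomeD:
  assumes "scale_class x = Some (k, s)"
  shows "signed s x = \<bar>x\<bar>" and "class_scale k \<le> \<bar>x\<bar>" and "\<bar>x\<bar> < r * class_scale k"
proof -
  have x: "x \<noteq> 0" and k: "k = \<lfloor>log r (\<bar>x\<bar> / a)\<rfloor>" and "s = (0 < x)"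
    using assms by (auto simp: scale_class_def split: if_splits)
  then show "signed s x = \<bar>x\<bar>"
    by (auto simp: signed_def)
  have log: "r powr (log r (\<bar>x\<bar> / a)) = \<bar>x\<bar> / a"
    using x a_pos r_gt_1 by simp
  have "r powr k \<le> r powr (log r (\<bar>x\<bar> / a))"
    using k r_gt_1 by (intro powr_mono) auto
  then show "class_scale k \<le> \<bar>x\<bar>"
    using log a_pos by (simp add: class_scale_def field_simps)
  have "r powr (log r (\<bar>x\<bar> / a)) < r powr (k + 1)"
    using k r_gt_1 by (intro powr_less_mono) linarith+
  then show "\<bar>x\<bar> < r * class_scale k"
    using log a_pos r_pos by (simp add: class_scale_def powr_add field_simps)
qed

lemma class_embed_rescale: "class_embed (scale_class x) (class_rescale (scale_class x) x) = x"
proof (cases "scale_class x")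
  case None
  moreover from None have "x = 0"
    by (simp add: scale_class_eq_None_iff)
  ultimately show ?thesis
    by (simp add: class_embed_def)
next
  case (Some ks)
  moreover obtain k s where "ks = (k, s)"
    by fastforce
  moreover have "s = (0 < x)" and "x \<noteq> 0"
    using Some \<open>ks = (k, s)\<close> by (auto simp: scale_class_def split: if_splits)
  ultimately show ?thesis
    using r_pos by (cases s) (auto simp: class_embed_def class_rescale_def)
qed

lemma dist_class_embed:
  "dist (class_embed \<kappa> u) (class_embed \<kappa> v) = class_weight \<kappa> * dist u v"
proof (cases \<kappa>)
  case (Some ks)
  obtain k s where "ks = (k, s)"
    by fastforce
  have "\<bar>r powr k * u - r powr k * v\<bar> = r powr k * \<bar>u - v\<bar>"
    by (simp add: abs_mult flip: right_diff_distrib)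
  with Some \<open>ks = (k, s)\<close> show ?thesis
    by (cases s) (simp_all add: class_embed_def class_weight_def dist_real_def)
qed (simp add: class_embed_def class_weight_def)

lemma class_embed_zero: "class_embed \<kappa> 0 = 0"
  by (simp add: class_embed_def split: option.splits)

sublocale class_decomposition scale_class class_embed class_rescale class_weight 0 0
  by unfold_locales (use class_embed_rescale dist_class_embed class_embed_zero in simp_all)

lemma class_rescale_range:
  assumes "scale_class x = Some ks"
  shows "a \<le> class_rescale (Some ks) x" and "class_rescale (Some ks) x \<le> a * r"
proof -
  obtain k s where ks: "ks = (k, s)"
    by fastforce
  have "0 < r powr k"
    using r_pos by simp
  with scale_class_SomeD[OF assms[unfolded ks]] show
    "a \<le> class_rescale (Some ks) x" "class_rescale (Some ks) x \<le> a * r"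
    by (simp_all add: class_rescale_def ks class_scale_def field_simps)
qed

section \<open>A potential for the class costs of an offline schedule\<close>

definition ramp :: "real \<Rightarrow> real" where
  "ramp u = max 0 (min 1 (4 * u - 1))"

text \<open>The distance from a server at \<open>y\<close> to its class-\<open>\<kappa>\<close> copy at \<open>z\<close>, capped at
  \<open>r * class_scale k\<close> and switched on by the ramp only once \<open>y\<close> exceeds \<open>class_scale k / 4\<close> on
  the side of \<open>\<kappa>\<close>. Since it saturates for \<open>y\<close> far beyond the class, moving the server
  changes it only for the classes between roughly the smaller and the larger of the old and
  new position, and these changes sum geometrically.\<close>

definition class_potential :: "scale_index \<Rightarrow> real \<Rightarrow> real \<Rightarrow> real" where
  "class_potential \<kappa> y z = (case \<kappa> of None \<Rightarrow> 0
     | Some (k, s) \<Rightarrow> min \<bar>y - z\<bar> (r * class_scale k) * ramp (signed s y / class_scale k))"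

definition admissible :: "scale_index \<Rightarrow> real \<Rightarrow> bool" where
  "admissible \<kappa> z \<longleftrightarrow> z = 0 \<or> scale_class z = \<kappa>"

lemma r_class_scale_pos: "0 < r * class_scale k"
  using r_pos class_scale_pos by simp

lemma ramp_nonneg: "0 \<le> ramp u" and ramp_le_1: "ramp u \<le> 1"
  by (auto simp: ramp_def)

lemma ramp_lipschitz: "\<bar>ramp u - ramp v\<bar> \<le> 4 * \<bar>u - v\<bar>"
  by (auto simp: ramp_def max_def min_def abs_if)

lemma ramp_eq_0: "u \<le> 1 / 4 \<Longrightarrow> ramp u = 0"
  by (simp add: ramp_def)

lemma ramp_eq_1: "1 / 2 \<le> u \<Longrightarrow> ramp u = 1"
  by (simp add: ramp_def)

lemma admissible_Some:
  assumes "admissible (Some (k, s)) z"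
  shows "signed s z = 0 \<or> class_scale k \<le> signed s z \<and> signed s z < r * class_scale k"
proof (cases "z = 0")
  case False
  with assms have "scale_class z = Some (k, s)"
    by (simp add: admissible_def)
  then show ?thesis
    using scale_class_SomeD by simp
qed (simp add: signed_def)

lemma admissible_None: "admissible None z \<Longrightarrow> z = 0"
  by (auto simp: admissible_def scale_class_eq_None_iff)

lemma admissible_class_position: "admissible \<kappa> (class_position p i \<kappa>)"
proof (induction p rule: rev_induct)
  case Nil
  then show ?case by (simp add: admissible_def)
next
  case (snoc q p)
  obtain j x where "q = (j, x)"
    by fastforce
  with snoc show ?case
    by (auto simp: class_position_snoc admissible_def)
qed

lemma class_potential_nonneg: "0 \<le> class_potential \<kappa> y z"
  using r_class_scale_pos
  by (auto simp: class_potential_def ramp_nonneg less_imp_le split: option.splits)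

lemma class_potential_le: "class_potential (Some (k, s)) y z \<le> r * class_scale k"
proof -
  have "min \<bar>y - z\<bar> (r * class_scale k) * ramp (signed s y / class_scale k)
      \<le> min \<bar>y - z\<bar> (r * class_scale k) * 1"
    using class_scale_pos[of k] r_pos by (intro mult_left_mono ramp_le_1) auto
  then show ?thesis
    by (simp add: class_potential_def)
qed

lemma class_potential_same: "class_potential \<kappa> x x = 0"
  using r_class_scale_pos by (simp add: class_potential_def less_imp_le split: option.splits)

lemma class_potential_lipschitz:
  "\<bar>class_potential \<kappa> x z - class_potential \<kappa> y z\<bar> \<le> (1 + 4 * r) * \<bar>x - y\<bar>"
proof (cases \<kappa>)
  case None
  then show ?thesis
    using r_pos by (simp add: class_potential_def)
next
  case (Some ks)
  obtain k s where ks: "ks = (k, s)"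
    by fastforce
  have L: "0 < class_scale k"
    by (rule class_scale_pos)
  have "\<bar>min \<bar>x - z\<bar> (r * class_scale k) - min \<bar>y - z\<bar> (r * class_scale k)\<bar> \<le> \<bar>x - y\<bar>"
    by linarith
  moreover have "\<bar>signed s x / class_scale k - signed s y / class_scale k\<bar> = \<bar>x - y\<bar> / class_scale k"
    using L dist_signed[of s x y] by (simp add: abs_divide flip: diff_divide_distrib)
  then have "\<bar>ramp (signed s x / class_scale k) - ramp (signed s y / class_scale k)\<bar> \<le>
      4 * (\<bar>x - y\<bar> / class_scale k)"
    using ramp_lipschitz by metis
  ultimately have "\<bar>class_potential \<kappa> x z - class_potential \<kappa> y z\<bar> \<le>
      \<bar>x - y\<bar> + r * class_scale k * (4 * (\<bar>x - y\<bar> / class_scale k))"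
    unfolding Some ks class_potential_def option.case prod.case
    using L r_pos by (intro abs_diff_mult_le ramp_nonneg ramp_le_1) simp_all
  also have "\<dots> = (1 + 4 * r) * \<bar>x - y\<bar>"
    using L by (simp add: field_simps)
  finally show ?thesis .
qed

lemma class_potential_eq_0: "signed s y \<le> class_scale k / 4 \<Longrightarrow> class_potential (Some (k, s)) y z = 0"
  using class_scale_pos[of k] by (simp add: class_potential_def ramp_eq_0 divide_simps)

lemma class_potential_saturated:
  assumes "admissible (Some (k, s)) z" and "2 * r * class_scale k \<le> signed s y"
  shows "class_potential (Some (k, s)) y z = r * class_scale k"
proof -
  have L: "0 < class_scale k"
    by (rule class_scale_pos)
  have "signed s z < r * class_scale k"
    using admissible_Some[OF assms(1)] r_class_scale_pos[of k] by auto
  then have "r * class_scale k \<le> \<bar>signed s y - signed s z\<bar>"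
    using assms(2) r_class_scale_pos[of k] by linarith
  then have "min \<bar>y - z\<bar> (r * class_scale k) = r * class_scale k"
    using dist_signed[of s y z] by simp
  moreover have "class_scale k \<le> 2 * r * class_scale k"
    using L r_gt_1 by simp
  then have "class_scale k / 2 \<le> signed s y"
    using assms(2) L by linarith
  then have "1 / 2 \<le> signed s y / class_scale k"
    using L by (simp add: field_simps)
  ultimately show ?thesis
    by (simp add: class_potential_def ramp_eq_1)
qed

text \<open>The potential released by the server pays for moving the class copy from \<open>z\<close> to \<open>x\<close>.\<close>

lemma class_move_le_potential:
  assumes "scale_class x = \<kappa>" and "admissible \<kappa> z"
  shows "\<bar>z - x\<bar> - class_potential \<kappa> y z \<le> 2 * r * \<bar>x - y\<bar>"
proof (cases \<kappa>)
  case None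
  with assms have "x = 0" "z = 0"
    using scale_class_eq_None_iff admissible_None by auto
  with None r_pos show ?thesis
    by (simp add: class_potential_def)
next
  case (Some ks)
  obtain k s where ks: "ks = (k, s)"
    by fastforce
  note x = scale_class_SomeD[OF assms(1)[unfolded Some ks]]
  have L: "0 < class_scale k"
    by (rule class_scale_pos)
  have zx: "\<bar>z - x\<bar> \<le> r * class_scale k"
    using admissible_Some[OF assms(2)[unfolded Some ks]] x dist_signed[of s z x] L r_gt_1
    by auto
  show ?thesis
  proof (cases "class_scale k / 2 \<le> signed s y")
    case True
    then have "1 / 2 \<le> signed s y / class_scale k"
      using L by (simp add: field_simps)
    then have "class_potential \<kappa> y z = min \<bar>y - z\<bar> (r * class_scale k)"
      using Some ks by (simp add: class_potential_def ramp_eq_1)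
    then have "\<bar>z - x\<bar> - class_potential \<kappa> y z \<le> \<bar>x - y\<bar>"
      using zx by linarith
    also have "\<dots> \<le> 2 * r * \<bar>x - y\<bar>"
      using r_gt_1 by (simp add: mult_le_cancel_right1)
    finally show ?thesis .
  next
    case False
    then have "r * class_scale k < 2 * r * \<bar>x - y\<bar>"
      using x dist_signed[of s x y] r_pos by simp
    then show ?thesis
      using zx class_potential_nonneg[of \<kappa> y z] by linarith
  qed
qed

lemma class_scale_shift:
  assumes "k \<le> k\<^sub>0"
  shows "class_scale k = class_scale k\<^sub>0 * (1 / r) ^ nat (k\<^sub>0 - k)"
proof -
  define n where "n = nat (k\<^sub>0 - k)"
  have k: "real_of_int k = real_of_int k\<^sub>0 + (- real n)"
    using assms by (simp add: n_def)
  have "r powr k = r powr k\<^sub>0 * r powr (- real n)"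
    unfolding k by (rule powr_add)
  also have "r powr (- real n) = inverse (r ^ n)"
    using r_pos by (simp add: powr_minus powr_realpow)
  finally show ?thesis
    by (simp add: class_scale_def n_def power_one_over inverse_eq_divide)
qed

lemma sum_class_scale_below_le:
  assumes "finite F" and "0 < \<beta>"
  shows "(\<Sum>k\<in>{k\<in>F. class_scale k < \<beta>}. class_scale k) \<le> \<beta> * r / (r - 1)"
proof (cases "{k\<in>F. class_scale k < \<beta>} = {}")
  case True
  show ?thesis
    unfolding True using assms r_gt_1 by simp
next
  case False
  define G where "G = {k\<in>F. class_scale k < \<beta>}"
  define k\<^sub>0 where "k\<^sub>0 = Max G"
  have G: "finite G" "G \<noteq> {}"
    using assms False by (simp_all add: G_def)
  have "k\<^sub>0 \<in> G" and le_k\<^sub>0: "\<And>k. k \<in> G \<Longrightarrow> k \<le> k\<^sub>0"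
    using G by (simp_all add: k\<^sub>0_def)
  have "(\<Sum>k\<in>G. class_scale k) = class_scale k\<^sub>0 * (\<Sum>k\<in>G. (1 / r) ^ nat (k\<^sub>0 - k))"
    unfolding sum_distrib_left using class_scale_shift le_k\<^sub>0 by (intro sum.cong) auto
  also have "\<dots> \<le> class_scale k\<^sub>0 * (1 / (1 - 1 / r))"
    using G le_k\<^sub>0 r_gt_1 class_scale_pos[of k\<^sub>0]
    by (intro mult_left_mono sum_power_nat_diff_le) auto
  also have "1 / (1 - 1 / r) = r / (r - 1)"
    using r_gt_1 by (simp add: field_simps)
  also have "class_scale k\<^sub>0 * (r / (r - 1)) \<le> \<beta> * (r / (r - 1))"
    using \<open>k\<^sub>0 \<in> G\<close> r_gt_1 by (intro mult_right_mono) (auto simp: G_def)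
  finally show ?thesis
    by (simp add: G_def)
qed

lemma sum_le_class_scale_below:
  assumes "finite F" and "0 < \<beta>" and "0 \<le> c"
    and "\<And>k. D k \<le> (if class_scale k < \<beta> then c * class_scale k else 0)"
  shows "sum D F \<le> c * (\<beta> * r / (r - 1))"
proof -
  have "sum D F \<le> (\<Sum>k\<in>F. if class_scale k < \<beta> then c * class_scale k else 0)"
    using assms(4) by (rule sum_mono)
  also have "\<dots> = (\<Sum>k\<in>{k\<in>F. class_scale k < \<beta>}. c * class_scale k)"
    using assms(1) by (simp add: sum.inter_filter)
  also have "\<dots> = c * (\<Sum>k\<in>{k\<in>F. class_scale k < \<beta>}. class_scale k)"
    by (simp add: sum_distrib_left)
  also have "\<dots> \<le> c * (\<beta> * r / (r - 1))"
    using sum_class_scale_below_le[OF assms(1,2)] assms(3) by (rule mult_left_mono)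
  finally show ?thesis .
qed

definition sign_potential_bound :: real where
  "sign_potential_bound = (1 + 4 * r) * (16 * r\<^sup>2 / (r - 1))"

lemma sign_potential_bound_ge: "16 * r\<^sup>2 / (r - 1) \<le> sign_potential_bound"
proof -
  have "0 \<le> 16 * r\<^sup>2 / (r - 1)"
    using r_gt_1 by simp
  then have "1 * (16 * r\<^sup>2 / (r - 1)) \<le> (1 + 4 * r) * (16 * r\<^sup>2 / (r - 1))"
    using r_pos by (intro mult_right_mono) auto
  then show ?thesis
    by (simp add: sign_potential_bound_def)
qed

lemma sign_potential_bound_nonneg: "0 \<le> sign_potential_bound"
proof -
  have "0 \<le> 16 * r\<^sup>2 / (r - 1)"
    using r_gt_1 by simp
  then show ?thesis
    using sign_potential_bound_ge by linarith
qed

text \<open>The terms \<open>D k\<close> vanish unless \<open>class_scale k\<close> lies between \<open>m / 2r\<close> and \<open>4 M\<close>: if \<open>m\<close> is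
  small compared to \<open>M\<close> the bound \<open>r * class_scale k\<close> sums to \<open>O(M) = O(M - m)\<close>; otherwise the
  Lipschitz bound is summed over the \<open>O(1)\<close> scales in the range.\<close>

lemma sum_localized_le_far:
  fixes D :: "int \<Rightarrow> real"
  assumes "finite F" and "0 < M" and "2 * m < M"
    and bounded: "\<And>k. D k \<le> r * class_scale k"
    and low: "\<And>k. M \<le> class_scale k / 4 \<Longrightarrow> D k = 0"
  shows "sum D F \<le> sign_potential_bound * (M - m)"
proof -
  have "D k \<le> (if class_scale k < 4 * M then r * class_scale k else 0)" for k
    using bounded[of k] low[of k] by auto
  then have "sum D F \<le> r * (4 * M * r / (r - 1))"
    using assms(1,2) r_pos by (intro sum_le_class_scale_below) auto
  also have "\<dots> = (16 * r\<^sup>2 / (r - 1)) * (M / 4)"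
    by (simp add: power2_eq_square field_simps)
  also have "\<dots> \<le> sign_potential_bound * (M - m)"
    using assms(2,3) sign_potential_bound_ge sign_potential_bound_nonneg
    by (intro mult_mono) (auto simp: field_simps)
  finally show ?thesis .
qed

lemma sum_localized_le_near:
  fixes D :: "int \<Rightarrow> real"
  assumes "finite F" and "0 < m" and "m \<le> M" and "M \<le> 2 * m"
    and lipschitz: "\<And>k. D k \<le> (1 + 4 * r) * (M - m)"
    and low: "\<And>k. M \<le> class_scale k / 4 \<Longrightarrow> D k = 0"
    and high: "\<And>k. 2 * r * class_scale k \<le> m \<Longrightarrow> D k = 0"
  shows "sum D F \<le> sign_potential_bound * (M - m)"
proof -
  define c where "c = (1 + 4 * r) * (M - m) * (2 * r / m)"
  have c: "0 \<le> c"
    using assms(2,3) r_pos by (simp add: c_def)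
  have "D k \<le> (if class_scale k < 4 * M then c * class_scale k else 0)" for k
  proof (cases "2 * r * class_scale k \<le> m")
    case True
    then show ?thesis
      using high[of k] c class_scale_pos[of k] by simp
  next
    case False
    then have "(1 + 4 * r) * (M - m) * 1 \<le> (1 + 4 * r) * (M - m) * (2 * r * class_scale k / m)"
      using assms(2,3) r_pos by (intro mult_left_mono) auto
    then show ?thesis
      using lipschitz[of k] low[of k] by (auto simp: c_def)
  qed
  then have "sum D F \<le> c * (4 * M * r / (r - 1))"
    using assms(1-3) c by (intro sum_le_class_scale_below) auto
  also have "\<dots> = (1 + 4 * r) * (M - m) * (8 * r\<^sup>2 / (r - 1)) * (M / m)"
    using assms(2) r_gt_1 by (simp add: c_def power2_eq_square field_simps)
  also have "\<dots> \<le> (1 + 4 * r) * (M - m) * (8 * r\<^sup>2 / (r - 1)) * 2"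
  proof (rule mult_left_mono)
    show "M / m \<le> 2"
      using assms(2,4) by (simp add: field_simps)
    show "0 \<le> (1 + 4 * r) * (M - m) * (8 * r\<^sup>2 / (r - 1))"
      using assms(3) r_gt_1 by simp
  qed
  also have "\<dots> = sign_potential_bound * (M - m)"
    by (simp add: sign_potential_bound_def)
  finally show ?thesis .
qed

lemma sum_localized_le:
  fixes D :: "int \<Rightarrow> real"
  assumes "finite F" and "m \<le> M"
    and "\<And>k. D k \<le> r * class_scale k"
    and "\<And>k. D k \<le> (1 + 4 * r) * (M - m)"
    and low: "\<And>k. M \<le> class_scale k / 4 \<Longrightarrow> D k = 0"
    and "\<And>k. 2 * r * class_scale k \<le> m \<Longrightarrow> D k = 0"
  shows "sum D F \<le> sign_potential_bound * (M - m)"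
proof -
  consider "M \<le> 0" | "0 < M" "2 * m < M" | "0 < m" "M \<le> 2 * m"
    by linarith
  then show ?thesis
  proof cases
    case 1
    then have "D k = 0" for k
      using low[of k] class_scale_pos[of k] by simp
    then show ?thesis
      using sign_potential_bound_nonneg \<open>m \<le> M\<close> by simp
  qed (use assms sum_localized_le_far sum_localized_le_near in blast)+
qed

lemma sum_sign_class_potential_diff_le:
  assumes "finite F" and Z: "\<And>k. admissible (Some (k, s)) (Z k)"
  shows "(\<Sum>k\<in>F. \<bar>class_potential (Some (k, s)) x (Z k) - class_potential (Some (k, s)) y (Z k)\<bar>)
    \<le> sign_potential_bound * \<bar>x - y\<bar>"
proof -
  define M where "M = max (signed s x) (signed s y)"
  define m where "m = min (signed s x) (signed s y)"
  have xy: "\<bar>x - y\<bar> = M - m"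
    using dist_signed[of s x y] by (auto simp: M_def m_def)
  show ?thesis
    unfolding xy
  proof (rule sum_localized_le[OF \<open>finite F\<close>])
    fix k
    let ?\<phi> = "\<lambda>u. class_potential (Some (k, s)) u (Z k)"
    show "\<bar>?\<phi> x - ?\<phi> y\<bar> \<le> r * class_scale k"
      using class_potential_nonneg class_potential_le by (smt (verit))
    show "\<bar>?\<phi> x - ?\<phi> y\<bar> \<le> (1 + 4 * r) * (M - m)"
      using class_potential_lipschitz[of "Some (k, s)" x "Z k" y] xy by simp
    show "\<bar>?\<phi> x - ?\<phi> y\<bar> = 0" if "M \<le> class_scale k / 4"
      using that class_potential_eq_0[of s x k] class_potential_eq_0[of s y k] by (simp add: M_def)
    show "\<bar>?\<phi> x - ?\<phi> y\<bar> = 0" if "2 * r * class_scale k \<le> m"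
      using that class_potential_saturated[OF Z, of k] by (simp add: m_def)
  qed (simp_all add: M_def m_def)
qed

lemma sum_class_potential_diff_le:
  assumes "finite K" and Z: "\<And>\<kappa>. admissible \<kappa> (Z \<kappa>)"
  shows "(\<Sum>\<kappa>\<in>K. \<bar>class_potential \<kappa> x (Z \<kappa>) - class_potential \<kappa> y (Z \<kappa>)\<bar>)
    \<le> 2 * sign_potential_bound * \<bar>x - y\<bar>"
proof -
  define D where "D \<kappa> = \<bar>class_potential \<kappa> x (Z \<kappa>) - class_potential \<kappa> y (Z \<kappa>)\<bar>" for \<kappa>
  have "sum D K \<le> (\<Sum>k\<in>{k. Some (k, True) \<in> K}. D (Some (k, True)))
      + (\<Sum>k\<in>{k. Some (k, False) \<in> K}. D (Some (k, False)))"
    using \<open>finite K\<close> by (rule sum_option_sign_le) (simp_all add: D_def class_potential_def)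
  also have "\<dots> \<le> sign_potential_bound * \<bar>x - y\<bar> + sign_potential_bound * \<bar>x - y\<bar>"
    unfolding D_def using finite_option_sign_classes[OF \<open>finite K\<close>] Z
    by (intro add_mono sum_sign_class_potential_diff_le)
  finally show ?thesis
    by (simp add: D_def)
qed

definition class_split_factor :: real where
  "class_split_factor = 2 * r + 2 * sign_potential_bound"

lemma class_split_factor_pos: "0 < class_split_factor"
  using r_pos sign_potential_bound_nonneg by (simp add: class_split_factor_def)

definition server_potential :: "scale_index set \<Rightarrow> real \<Rightarrow> (scale_index \<Rightarrow> real) \<Rightarrow> real" where
  "server_potential K y Z = (\<Sum>\<kappa>\<in>K. class_potential \<kappa> y (Z \<kappa>))"

lemma server_potential_step:
  assumes "finite K" and "scale_class x \<in> K" and Z: "\<And>\<kappa>. admissible \<kappa> (Z \<kappa>)"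
  shows "\<bar>Z (scale_class x) - x\<bar> + server_potential K x (Z(scale_class x := x))
      - server_potential K y Z \<le> class_split_factor * \<bar>x - y\<bar>"
proof -
  define \<kappa>\<^sub>x where "\<kappa>\<^sub>x = scale_class x"
  have "(\<Sum>\<kappa>\<in>K. class_potential \<kappa> x ((Z(\<kappa>\<^sub>x := x)) \<kappa>) - class_potential \<kappa> y (Z \<kappa>))
      = - class_potential \<kappa>\<^sub>x y (Z \<kappa>\<^sub>x) +
        (\<Sum>\<kappa>\<in>K - {\<kappa>\<^sub>x}. class_potential \<kappa> x (Z \<kappa>) - class_potential \<kappa> y (Z \<kappa>))"
    using assms(1,2) by (simp add: sum.remove \<kappa>\<^sub>x_def class_potential_same)
  also have "(\<Sum>\<kappa>\<in>K - {\<kappa>\<^sub>x}. class_potential \<kappa> x (Z \<kappa>) - class_potential \<kappa> y (Z \<kappa>))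
      \<le> (\<Sum>\<kappa>\<in>K. \<bar>class_potential \<kappa> x (Z \<kappa>) - class_potential \<kappa> y (Z \<kappa>)\<bar>)"
    using assms(1) by (intro order_trans[OF sum_mono sum_mono2]) auto
  also have "\<dots> \<le> 2 * sign_potential_bound * \<bar>x - y\<bar>"
    using sum_class_potential_diff_le[OF assms(1) Z] .
  finally have "\<bar>Z \<kappa>\<^sub>x - x\<bar> +
      (\<Sum>\<kappa>\<in>K. class_potential \<kappa> x ((Z(\<kappa>\<^sub>x := x)) \<kappa>) - class_potential \<kappa> y (Z \<kappa>))
    \<le> (\<bar>Z \<kappa>\<^sub>x - x\<bar> - class_potential \<kappa>\<^sub>x y (Z \<kappa>\<^sub>x)) + 2 * sign_potential_bound * \<bar>x - y\<bar>"
    by simp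
  also have "\<dots> \<le> 2 * r * \<bar>x - y\<bar> + 2 * sign_potential_bound * \<bar>x - y\<bar>"
    using class_move_le_potential[OF \<kappa>\<^sub>x_def[symmetric] Z] by simp
  finally show ?thesis
    by (simp add: \<kappa>\<^sub>x_def class_split_factor_def server_potential_def sum_subtractf algebra_simps)
qed

definition schedule_potential :: "nat set \<Rightarrow> scale_index set \<Rightarrow> (nat \<times> real) list \<Rightarrow> real" where
  "schedule_potential I K p =
    (\<Sum>i\<in>I. server_potential K (schedule_config (\<lambda>_. 0) p i) (class_position p i))"

lemma schedule_potential_nonneg: "0 \<le> schedule_potential I K p"
  unfolding schedule_potential_def server_potential_def
  by (intro sum_nonneg class_potential_nonneg)

lemma schedule_potential_snoc:
  assumes "finite I" and "i \<in> I"
  shows "schedule_potential I K (p @ [(i, x)]) = schedule_potential I K p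
    + server_potential K x ((class_position p i)(scale_class x := x))
    - server_potential K (schedule_config (\<lambda>_. 0) p i) (class_position p i)"
proof -
  define f where
    "f q j = server_potential K (schedule_config (\<lambda>_. 0) q j) (class_position q j)" for q j
  have "f (p @ [(i, x)]) j = f p j" if "j \<noteq> i" for j
    using that by (simp add: f_def class_position_snoc)
  then have "(\<Sum>j\<in>I - {i}. f (p @ [(i, x)]) j) = (\<Sum>j\<in>I - {i}. f p j)"
    by (intro sum.cong) auto
  then show ?thesis
    using assms by (simp add: schedule_potential_def sum.remove class_position_snoc flip: f_def)
qed

lemma class_schedule_costs_le:
  assumes "finite I" and "fst ` set p \<subseteq> I" and "finite K" and "scale_class ` snd ` set p \<subseteq> K"
  shows "(\<Sum>\<kappa>\<in>K. class_weight \<kappa> * schedule_cost (\<lambda>_. 0) (class_schedule \<kappa> p))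
      + schedule_potential I K p \<le> class_split_factor * schedule_cost (\<lambda>_. 0) p"
  using assms(2,4)
proof (induction p rule: rev_induct)
  case Nil
  show ?case
    by (simp add: schedule_potential_def server_potential_def class_potential_same)
next
  case (snoc q p)
  obtain i x where q: "q = (i, x)"
    by fastforce
  with snoc.prems have "i \<in> I" and "scale_class x \<in> K"
    by auto
  define y where "y = schedule_config (\<lambda>_. 0) p i"
  have "\<bar>class_position p i (scale_class x) - x\<bar>
      + server_potential K x ((class_position p i)(scale_class x := x))
      - server_potential K y (class_position p i) \<le> class_split_factor * \<bar>x - y\<bar>"
    using assms(3) \<open>scale_class x \<in> K\<close> admissible_class_position by (rule server_potential_step)
  moreover have "(\<Sum>\<kappa>\<in>K. class_weight \<kappa> * schedule_cost (\<lambda>_. 0) (class_schedule \<kappa> p))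
      + schedule_potential I K p \<le> class_split_factor * schedule_cost (\<lambda>_. 0) p"
    using snoc by simp
  ultimately show ?case
    using assms(1,3) \<open>i \<in> I\<close> \<open>scale_class x \<in> K\<close>
    by (simp add: q sum_weighted_class_schedule_cost_snoc schedule_potential_snoc schedule_cost_snoc
        dist_real_def abs_minus_commute distrib_left flip: y_def)
qed

lemma sum_class_opt_cost_le:
  "(\<Sum>\<kappa>\<in>scale_class ` set \<sigma>. class_weight \<kappa> * opt_cost 0 (class_requests \<kappa> \<sigma>))
    \<le> class_split_factor * opt_cost 0 \<sigma>"
proof -
  define T where "T = (\<Sum>\<kappa>\<in>scale_class ` set \<sigma>. class_weight \<kappa> * opt_cost 0 (class_requests \<kappa> \<sigma>))"
  have "T / class_split_factor \<le> opt_cost 0 \<sigma>"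
  proof (rule opt_cost_greatest)
    fix cs :: "nat list"
    assume len: "length cs = length \<sigma>"
    define p where "p = zip cs \<sigma>"
    have \<sigma>: "\<sigma> = map snd p"
      using len by (simp add: p_def)
    have "T \<le> (\<Sum>\<kappa>\<in>scale_class ` set \<sigma>. class_weight \<kappa> * schedule_cost (\<lambda>_. 0) (class_schedule \<kappa> p))"
      unfolding T_def \<sigma>
      by (intro sum_mono mult_left_mono opt_cost_class_requests_le class_weight_nonneg)
    also have "\<dots> \<le> class_split_factor * schedule_cost (\<lambda>_. 0) p"
    proof -
      have "fst ` set p \<subseteq> set cs" and "scale_class ` snd ` set p \<subseteq> scale_class ` set \<sigma>"
        by (auto simp: p_def dest: set_zip_leftD set_zip_rightD)
      then show ?thesis
        using class_schedule_costs_le[of "set cs" p "scale_class ` set \<sigma>"]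
          schedule_potential_nonneg[of "set cs" "scale_class ` set \<sigma>" p]
        by simp
    qed
    also have "schedule_cost (\<lambda>_. 0) p = serve_cost (\<lambda>_. 0) cs \<sigma>"
      using len by (simp add: p_def serve_cost_eq_schedule_cost)
    finally show "T / class_split_factor \<le> serve_cost (\<lambda>_. 0) cs \<sigma>"
      using class_split_factor_pos by (simp add: field_simps mult.commute)
  qed
  then show ?thesis
    using class_split_factor_pos by (simp add: T_def field_simps mult.commute)
qed

lemma weighted_class_alg_cost_le:
  assumes bound: "\<forall>\<sigma>. set \<sigma> \<subseteq> {0} \<union> {a..a * r} \<longrightarrow> alg_cost A 0 \<sigma> \<le> \<rho> * opt_cost 0 \<sigma> + c"
  shows "class_weight \<kappa> * alg_cost A 0 (class_requests \<kappa> \<sigma>)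
    \<le> (max \<rho> 0 + c / a) * (class_weight \<kappa> * opt_cost 0 (class_requests \<kappa> \<sigma>))"
proof (cases \<kappa>)
  case None
  then show ?thesis
    by (simp add: class_weight_def)
next
  case (Some ks)
  then have range: "a \<le> x \<and> x \<le> a * r" if "x \<in> set (class_requests \<kappa> \<sigma>)" for x
    using that class_rescale_range[of _ ks] by (auto simp: class_requests_def)
  then have "alg_cost A 0 (class_requests \<kappa> \<sigma>)
      \<le> (max \<rho> 0 + c / a) * opt_cost 0 (class_requests \<kappa> \<sigma>)"
    using a_pos
    by (intro alg_cost_le_mult_opt_cost[OF bound]) (auto simp: dist_real_def dest!: range)
  then show ?thesis
    using class_weight_nonneg[of \<kappa>] by (metis mult_left_mono mult.left_commute)
qed

theorem competitive_real_line:
  assumes "competitive ({0} \<union> {a..a * r}) 0"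
  shows "competitive (UNIV :: real set) 0"
proof -
  obtain A \<rho> c where bound:
    "\<forall>\<sigma>. set \<sigma> \<subseteq> {0} \<union> {a..a * r} \<longrightarrow> alg_cost A 0 \<sigma> \<le> \<rho> * opt_cost 0 \<sigma> + c"
    using assms unfolding competitive_def by blast
  define \<rho>' where "\<rho>' = max \<rho> 0 + c / a"
  have "0 \<le> \<rho>'"
    using bound[rule_format, of "[]"] a_pos by (simp add: \<rho>'_def)
  have "alg_cost (class_algorithm A) 0 \<sigma> \<le> \<rho>' * class_split_factor * opt_cost 0 \<sigma>" for \<sigma>
  proof -
    have "alg_cost (class_algorithm A) 0 \<sigma> =
        (\<Sum>\<kappa>\<in>scale_class ` set \<sigma>. class_weight \<kappa> * alg_cost A 0 (class_requests \<kappa> \<sigma>))"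
      by (rule alg_cost_class_algorithm) auto
    also have "\<dots> \<le> \<rho>' * (\<Sum>\<kappa>\<in>scale_class ` set \<sigma>. class_weight \<kappa> * opt_cost 0 (class_requests \<kappa> \<sigma>))"
      unfolding sum_distrib_left \<rho>'_def by (intro sum_mono weighted_class_alg_cost_le bound)
    also have "\<dots> \<le> \<rho>' * (class_split_factor * opt_cost 0 \<sigma>)"
      using sum_class_opt_cost_le \<open>0 \<le> \<rho>'\<close> by (rule mult_left_mono)
    finally show ?thesis
      by (simp add: mult.assoc)
  qed
  then show ?thesis
    unfolding competitive_def by (metis add.right_neutral)
qed

end

theorem corollary2:
  fixes a b :: real
  assumes "0 < a" and "a < b"
  shows "competitive (UNIV :: real set) 0 \<longleftrightarrow> competitive ({0} \<union> {a..b}) 0"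
proof
  assume "competitive (UNIV :: real set) 0"
  then show "competitive ({0} \<union> {a..b}) 0"
    by (rule competitive_subset) simp
next
  interpret scale_classes a "b / a"
    using assms by unfold_locales auto
  assume "competitive ({0} \<union> {a..b}) 0"
  moreover have "a * (b / a) = b"
    using assms by simp
  ultimately show "competitive (UNIV :: real set) 0"
    using competitive_real_line by metis
qed

end
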